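(* Let $\beta\in\{1,2\}$ and let $r\geq\beta$ be an integer. Let $x\in[0,1]^N$ satisfy $\|(D^\beta)^Tx\|_0\leq s$, and let $q=Q^{\Sigma\Delta,r}_{\mathcal{A}_\delta}(x)$ be its $r$-th order $\Sigma\Delta$ quantization, whose state vector $u$ satisfies $x-q=D^ru$ and $\|u\|_\infty\leq\delta/2$. Let $\hat x$ be a solution to $$\min_{z\in\mathbb{R}^N}\|(D^\beta)^Tz\|_1\quad\text{subject to}\quad \|D^{-r}(z-q)\|_\infty\leq\delta/2.$$ Then $\|\hat x-x\|_2\leq C\sqrt{s}\,\delta$, where $C$ is a constant independent of $x$.
   Context: $D$ is the $N\times N$ matrix with $1$ on the diagonal, $-1$ on the subdiagonal, $0$ elsewhere; $D^r$ is its $r$-th power. $\|v\|_0$ is the number of nonzero entries. The alphabet is $\mathcal{A}_\delta=\{c+J\delta: J\in\mathbb{Z},\ J_1\leq J\leq J_2\}$ with step size $\delta>0$, and $Q_{\mathcal{A}}(z)$ is an element of $\mathcal{A}$ nearest to $z$. The $r$-th order $\Sigma\Delta$ quantization of $y\in\mathbb{R}^N$: with $u_i=0$ for $i\leq 0$, for $i=1,\dots,N$ set $q_i=Q_{\mathcal{A}}\big(\sum_{j=1}^r(-1)^{j-1}\binom{r}{j}u_{i-j}+y_i\big)$ and define $u_i$ by $(D^ru)_i=y_i-q_i$. The alphabet is assumed to have enough levels that the scheme is stable with $\|u\|_\infty\leq\delta/2$. *)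

theory Defs
  imports Complex_Main "Jordan_Normal_Form.Matrix"
begin

text \<open>Vectors in R^N are JNF vectors of dimension N, indexed 0..N-1
  (paper index i corresponds to i-1 here).\<close>

definition Dmat :: "nat \<Rightarrow> real mat" where
  "Dmat N = mat N N (\<lambda>(i,j). if i = j then 1 else if i = j + 1 then -1 else 0)"

definition Dinv_pow :: "nat \<Rightarrow> nat \<Rightarrow> real vec \<Rightarrow> real vec" where
  "Dinv_pow N r v = (THE w. w \<in> carrier_vec N \<and> (Dmat N ^\<^sub>m r) *\<^sub>v w = v)"

definition l0norm :: "real vec \<Rightarrow> nat" where
  "l0norm v = card {i. i < dim_vec v \<and> v $ i \<noteq> 0}"

definition l1norm :: "real vec \<Rightarrow> real" where
  "l1norm v = (\<Sum>i<dim_vec v. \<bar>v $ i\<bar>)"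

definition l2norm :: "real vec \<Rightarrow> real" where
  "l2norm v = sqrt (\<Sum>i<dim_vec v. (v $ i)\<^sup>2)"

definition linfnorm :: "real vec \<Rightarrow> real" where
  "linfnorm v = (if dim_vec v = 0 then 0 else Max {\<bar>v $ i\<bar> | i. i < dim_vec v})"

definition alphabet :: "real \<Rightarrow> real \<Rightarrow> int \<Rightarrow> int \<Rightarrow> real set" where
  "alphabet c \<delta> J1 J2 = {c + of_int J * \<delta> | J. J1 \<le> J \<and> J \<le> J2}"

text \<open>a is an element of A nearest to z (a valid value of Q_A(z)).\<close>
definition nearest :: "real set \<Rightarrow> real \<Rightarrow> real \<Rightarrow> bool" where
  "nearest A z a \<longleftrightarrow> a \<in> A \<and> (\<forall>b\<in>A. \<bar>z - a\<bar> \<le> \<bar>z - b\<bar>)"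

definition sigma_delta :: "real set \<Rightarrow> nat \<Rightarrow> real vec \<Rightarrow> real vec \<Rightarrow> real vec \<Rightarrow> bool" where
  "sigma_delta A r y q u \<longleftrightarrow>
     (let N = dim_vec y in
      q \<in> carrier_vec N \<and> u \<in> carrier_vec N \<and>
      (\<forall>i<N. nearest A
          ((\<Sum>j\<in>{1..r}. (-1)^(j-1) * real (r choose j) * (if j \<le> i then u $ (i - j) else 0)) + y $ i)
          (q $ i)) \<and>
      (Dmat N ^\<^sub>m r) *\<^sub>v u = y - q)"

end

theory Submission
  imports Defs
begin

(* Write h = xhat - x. The state vectors of x and of xhat give h = D^r w with |w|_inf <= delta,
   so h = D^beta g with |g|_inf <= 2^(r-beta) delta.  Moving D^beta across the inner product,
   |h|_2^2 = <(D^beta)^T h, g> <= |(D^beta)^T h|_1 |g|_inf.  Minimality of xhat and the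
   s-sparsity of (D^beta)^T x put v = (D^beta)^T h in the l1 descent cone, where
   |v|_1 <= 2 sqrt s |v|_2, and |v|_2 <= 2^beta |h|_2.  Dividing by |h|_2 gives
   |h|_2 <= 2^(r+1) sqrt s delta. *)

lemma pow_mat_add:
  assumes "A \<in> carrier_mat n n"
  shows "A ^\<^sub>m (k + l) = A ^\<^sub>m k * A ^\<^sub>m l"
proof (induction l)
  case 0 then show ?case using assms by simp
next
  case (Suc l) then show ?case using assms by (simp add: assoc_mult_mat[of _ n n _ n _ n])
qed

lemma pow_mat_Suc_left:
  assumes "A \<in> carrier_mat n n"
  shows "A ^\<^sub>m Suc k = A * A ^\<^sub>m k"
  using pow_mat_add[OF assms, of 1 k] assms by simp

lemma transpose_pow_mat:
  fixes A :: "'a :: comm_semiring_1 mat"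
  assumes "A \<in> carrier_mat n n"
  shows "transpose_mat (A ^\<^sub>m k) = transpose_mat A ^\<^sub>m k"
proof (induction k)
  case 0 then show ?case using assms by simp
next
  case (Suc k)
  have "transpose_mat (A ^\<^sub>m Suc k) = transpose_mat (A * A ^\<^sub>m k)"
    by (simp only: pow_mat_Suc_left[OF assms])
  also have "\<dots> = transpose_mat A ^\<^sub>m k * transpose_mat A"
    using assms by (simp add: transpose_mult[of A n n _ n] Suc)
  finally show ?case by simp
qed

lemma Dmat_carrier [simp]: "Dmat N \<in> carrier_mat N N"
  and Dmat_dims [simp]: "dim_row (Dmat N) = N" "dim_col (Dmat N) = N"
  by (simp_all add: Dmat_def)

lemma Dmat_mult_vec_nth:
  assumes "w \<in> carrier_vec N" "i < N"
  shows "(Dmat N *\<^sub>v w) $ i = w $ i - (if i = 0 then 0 else w $ (i - 1))"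
proof -
  have "(Dmat N *\<^sub>v w) $ i
      = (\<Sum>j<N. (if j = i then w $ j else 0) - (if j + 1 = i then w $ j else 0))"
    using assms by (auto simp: Dmat_def scalar_prod_def atLeast0LessThan intro!: sum.cong)
  then show ?thesis
    using assms by (cases i) (auto simp: sum_subtractf)
qed

lemma transpose_Dmat_mult_vec_nth:
  assumes "w \<in> carrier_vec N" "i < N"
  shows "(transpose_mat (Dmat N) *\<^sub>v w) $ i = w $ i - (if i + 1 < N then w $ (i + 1) else 0)"
proof -
  have "(transpose_mat (Dmat N) *\<^sub>v w) $ i
      = (\<Sum>j<N. (if j = i then w $ j else 0) - (if j = i + 1 then w $ j else 0))"
    using assms by (auto simp: Dmat_def scalar_prod_def atLeast0LessThan intro!: sum.cong)
  then show ?thesis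
    using assms by (auto simp: sum_subtractf)
qed

lemma bij_betw_pow_mat_mult_vec:
  assumes "A \<in> carrier_mat n n" "bij_betw ((*\<^sub>v) A) (carrier_vec n) (carrier_vec n)"
  shows "bij_betw ((*\<^sub>v) (A ^\<^sub>m k)) (carrier_vec n) (carrier_vec n)"
proof (induction k)
  case 0
  have "bij_betw id (carrier_vec n) (carrier_vec n)" by simp
  then show ?case by (rule bij_betw_cong[THEN iffD1, rotated]) (use assms in auto)
next
  case (Suc k)
  have "bij_betw ((*\<^sub>v) (A ^\<^sub>m k) \<circ> (*\<^sub>v) A) (carrier_vec n) (carrier_vec n)"
    using assms(2) Suc by (rule bij_betw_trans)
  then show ?case
    by (rule bij_betw_cong[THEN iffD1, rotated])
      (use assms in \<open>auto simp: assoc_mult_mat_vec[of _ n n _ n]\<close>)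
qed

lemma bij_betw_Dmat_mult_vec: "bij_betw ((*\<^sub>v) (Dmat N)) (carrier_vec N) (carrier_vec N)"
proof (rule bij_betw_imageI)
  show "inj_on ((*\<^sub>v) (Dmat N)) (carrier_vec N)"
  proof (rule inj_onI)
    fix a b :: "real vec"
    assume ab: "a \<in> carrier_vec N" "b \<in> carrier_vec N" and eq: "Dmat N *\<^sub>v a = Dmat N *\<^sub>v b"
    have "i < N \<Longrightarrow> a $ i = b $ i" for i
      by (induction i) (use eq Dmat_mult_vec_nth[OF ab(1)] Dmat_mult_vec_nth[OF ab(2)] in force)+
    then show "a = b" using ab by (intro eq_vecI) auto
  qed
  show "(*\<^sub>v) (Dmat N) ` carrier_vec N = carrier_vec N"
  proof (intro subset_antisym subsetI)
    fix v :: "real vec" assume v: "v \<in> carrier_vec N"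
    define w where "w = vec N (\<lambda>i. \<Sum>j\<le>i. v $ j)"
    have w: "w \<in> carrier_vec N" by (simp add: w_def)
    have "Dmat N *\<^sub>v w = v"
    proof (rule eq_vecI)
      fix i assume "i < dim_vec v"
      then show "(Dmat N *\<^sub>v w) $ i = v $ i"
        by (subst Dmat_mult_vec_nth[OF w]) (use v in \<open>auto simp: w_def gr0_conv_Suc\<close>)
    qed (use v in simp)
    with w show "v \<in> (*\<^sub>v) (Dmat N) ` carrier_vec N" by blast
  qed (use mult_mat_vec_carrier[OF Dmat_carrier] in blast)
qed

lemma Dinv_pow_unique:
  assumes "w \<in> carrier_vec N" "(Dmat N ^\<^sub>m r) *\<^sub>v w = v"
  shows "Dinv_pow N r v = w"
  unfolding Dinv_pow_def
  using bij_betw_pow_mat_mult_vec[OF Dmat_carrier bij_betw_Dmat_mult_vec, of N r] assms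
  by (auto simp: bij_betw_def inj_on_def)

lemma
  assumes "v \<in> carrier_vec N"
  shows Dinv_pow_carrier: "Dinv_pow N r v \<in> carrier_vec N"
    and Dmat_pow_mult_vec_Dinv_pow: "(Dmat N ^\<^sub>m r) *\<^sub>v Dinv_pow N r v = v"
proof -
  obtain w where "w \<in> carrier_vec N" "(Dmat N ^\<^sub>m r) *\<^sub>v w = v"
    using bij_betw_pow_mat_mult_vec[OF Dmat_carrier bij_betw_Dmat_mult_vec, of N r] assms
    by (metis bij_betw_def imageE)
  with Dinv_pow_unique
  show "Dinv_pow N r v \<in> carrier_vec N" "(Dmat N ^\<^sub>m r) *\<^sub>v Dinv_pow N r v = v"
    by simp_all
qed

lemma pow_mat_mult_vec_norm_le:
  fixes nrm :: "'a :: semiring_1 vec \<Rightarrow> real"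
  assumes A: "A \<in> carrier_mat n n" and c: "0 \<le> c"
    and step: "\<And>w. w \<in> carrier_vec n \<Longrightarrow> nrm (A *\<^sub>v w) \<le> c * nrm w"
    and w: "w \<in> carrier_vec n"
  shows "nrm ((A ^\<^sub>m k) *\<^sub>v w) \<le> c ^ k * nrm w"
  using w
proof (induction k arbitrary: w)
  case 0
  then show ?case using A by simp
next
  case (Suc k)
  have "nrm ((A ^\<^sub>m Suc k) *\<^sub>v w) = nrm ((A ^\<^sub>m k) *\<^sub>v (A *\<^sub>v w))"
    using A Suc.prems by (simp add: assoc_mult_mat_vec[of _ n n _ n])
  also have "\<dots> \<le> c ^ k * nrm (A *\<^sub>v w)"
    using Suc.IH A Suc.prems by simp
  also have "\<dots> \<le> c ^ k * (c * nrm w)"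
    using step[OF Suc.prems] c by (simp add: mult_left_mono)
  finally show ?case by (simp add: ac_simps)
qed

lemma abs_le_linfnorm:
  assumes "i < dim_vec w"
  shows "\<bar>w $ i\<bar> \<le> linfnorm w"
  using assms by (auto simp: linfnorm_def intro!: Max_ge)

lemma linfnorm_nonneg: "0 \<le> linfnorm w"
proof (cases "dim_vec w = 0")
  case False
  then show ?thesis using abs_le_linfnorm[of 0 w] by linarith
qed (simp add: linfnorm_def)

lemma linfnorm_le:
  assumes "0 \<le> K" "\<And>i. i < dim_vec w \<Longrightarrow> \<bar>w $ i\<bar> \<le> K"
  shows "linfnorm w \<le> K"
proof (cases "dim_vec w = 0")
  case False
  then have "{\<bar>w $ i\<bar> | i. i < dim_vec w} \<noteq> {}" by blast
  then show ?thesis using assms by (auto simp: linfnorm_def intro!: Max.boundedI)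
qed (simp add: linfnorm_def assms)

lemma linfnorm_minus_le:
  assumes "a \<in> carrier_vec n" "b \<in> carrier_vec n"
  shows "linfnorm (a - b) \<le> linfnorm a + linfnorm b"
proof (rule linfnorm_le)
  show "0 \<le> linfnorm a + linfnorm b" by (simp add: linfnorm_nonneg)
  fix i assume "i < dim_vec (a - b)"
  then show "\<bar>(a - b) $ i\<bar> \<le> linfnorm a + linfnorm b"
    using assms abs_le_linfnorm[of i a] abs_le_linfnorm[of i b] by auto
qed

lemma linfnorm_Dmat_mult_vec_le:
  assumes w: "w \<in> carrier_vec N"
  shows "linfnorm (Dmat N *\<^sub>v w) \<le> 2 * linfnorm w"
proof (rule linfnorm_le)
  fix i assume "i < dim_vec (Dmat N *\<^sub>v w)"
  then have i: "i < N" by simp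
  have "\<bar>w $ i\<bar> \<le> linfnorm w" "\<bar>w $ (i - 1)\<bar> \<le> linfnorm w"
    using w i by (auto intro!: abs_le_linfnorm)
  then show "\<bar>(Dmat N *\<^sub>v w) $ i\<bar> \<le> 2 * linfnorm w"
    unfolding Dmat_mult_vec_nth[OF w i]
    using linfnorm_nonneg[of w] abs_triangle_ineq4[of "w $ i" "w $ (i - 1)"] by auto
qed (simp add: linfnorm_nonneg)

lemma scalar_prod_le_l1norm_linfnorm:
  assumes "v \<in> carrier_vec n" "g \<in> carrier_vec n"
  shows "v \<bullet> g \<le> l1norm v * linfnorm g"
proof -
  have "v \<bullet> g = (\<Sum>i<n. v $ i * g $ i)"
    using assms by (simp add: scalar_prod_def atLeast0LessThan)
  also have "\<dots> \<le> (\<Sum>i<n. \<bar>v $ i\<bar> * linfnorm g)"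
  proof (rule sum_mono)
    fix i assume "i \<in> {..<n}"
    then have "\<bar>g $ i\<bar> \<le> linfnorm g" using assms by (intro abs_le_linfnorm) auto
    then have "\<bar>v $ i * g $ i\<bar> \<le> \<bar>v $ i\<bar> * linfnorm g" by (simp add: abs_mult mult_left_mono)
    then show "v $ i * g $ i \<le> \<bar>v $ i\<bar> * linfnorm g" by linarith
  qed
  also have "\<dots> = l1norm v * linfnorm g"
    using assms by (simp add: l1norm_def sum_distrib_right)
  finally show ?thesis .
qed

lemma l2norm_nonneg: "0 \<le> l2norm h"
  by (simp add: l2norm_def sum_nonneg)

lemma l2norm_square: "(l2norm h)\<^sup>2 = h \<bullet> h"
  by (simp add: l2norm_def scalar_prod_def power2_eq_square atLeast0LessThan sum_nonneg)

lemma l2norm_transpose_Dmat_mult_vec_le: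
  assumes h: "h \<in> carrier_vec N"
  shows "l2norm (transpose_mat (Dmat N) *\<^sub>v h) \<le> 2 * l2norm h"
proof -
  define f where "f i = (h $ i)\<^sup>2" for i
  have shift: "(\<Sum>i<N. if i + 1 < N then f (i + 1) else 0) \<le> (\<Sum>i<N. f i)"
  proof (cases N)
    case (Suc M)
    have "(\<Sum>i<N. if i + 1 < N then f (i + 1) else 0) = (\<Sum>i<M. f (Suc i))"
      using Suc by simp
    also have "\<dots> \<le> (\<Sum>i<N. f i)"
      unfolding Suc sum.lessThan_Suc_shift by (simp add: f_def)
    finally show ?thesis .
  qed simp
  have "(\<Sum>i<N. ((transpose_mat (Dmat N) *\<^sub>v h) $ i)\<^sup>2)
      \<le> (\<Sum>i<N. 2 * f i + 2 * (if i + 1 < N then f (i + 1) else 0))"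
  proof (rule sum_mono)
    fix i assume "i \<in> {..<N}"
    have "(a - b)\<^sup>2 \<le> 2 * a\<^sup>2 + 2 * b\<^sup>2" for a b :: real
      using zero_le_power2[of "a + b"] by (simp add: power2_diff power2_sum)
    then show "((transpose_mat (Dmat N) *\<^sub>v h) $ i)\<^sup>2
        \<le> 2 * f i + 2 * (if i + 1 < N then f (i + 1) else 0)"
      using \<open>i \<in> {..<N}\<close> by (subst transpose_Dmat_mult_vec_nth[OF h]) (auto simp: f_def)
  qed
  also have "\<dots> \<le> 4 * (\<Sum>i<N. f i)"
    using shift by (simp add: sum.distrib sum_distrib_left[symmetric])
  finally have "l2norm (transpose_mat (Dmat N) *\<^sub>v h) \<le> sqrt (4 * (\<Sum>i<N. f i))"
    using h by (simp add: l2norm_def)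
  also have "\<dots> = 2 * l2norm h"
    using h by (simp add: l2norm_def f_def real_sqrt_mult)
  finally show ?thesis .
qed

lemma sum_squared_le_card_mult_sum_squares:
  fixes a :: "'b \<Rightarrow> real"
  shows "(\<Sum>i\<in>S. a i)\<^sup>2 \<le> card S * (\<Sum>i\<in>S. (a i)\<^sup>2)"
proof -
  have "(\<Sum>i\<in>S. a i)\<^sup>2 = (\<Sum>i\<in>S. \<Sum>j\<in>S. a i * a j)"
    by (simp add: power2_eq_square sum_product)
  also have "\<dots> \<le> (\<Sum>i\<in>S. \<Sum>j\<in>S. ((a i)\<^sup>2 + (a j)\<^sup>2) / 2)"
  proof (intro sum_mono)
    fix i j
    show "a i * a j \<le> ((a i)\<^sup>2 + (a j)\<^sup>2) / 2"
      using zero_le_power2[of "a i - a j"] by (simp add: power2_diff)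
  qed
  also have "\<dots> = card S * (\<Sum>i\<in>S. (a i)\<^sup>2)"
    by (simp add: sum.distrib add_divide_distrib sum_divide_distrib[symmetric] sum_distrib_left[symmetric])
  finally show ?thesis .
qed

lemma l1norm_le_in_sparse_descent_cone:
  assumes y: "y \<in> carrier_vec n" and v: "v \<in> carrier_vec n"
    and sparse: "l0norm y \<le> s" and descent: "l1norm (y + v) \<le> l1norm y"
  shows "l1norm v \<le> 2 * sqrt s * l2norm v"
proof -
  define S where "S = {i. i < n \<and> y $ i \<noteq> 0}"
  define T where "T = {..<n} - S"
  have split: "(\<Sum>i<n. f i) = (\<Sum>i\<in>T. f i) + (\<Sum>i\<in>S. f i)" for f :: "nat \<Rightarrow> real"
    unfolding T_def by (rule sum.subset_diff) (auto simp: S_def)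
  have y_T: "y $ i = 0" if "i \<in> T" for i
    using that by (simp add: S_def T_def)
  have "l1norm y = (\<Sum>i\<in>S. \<bar>y $ i\<bar>)"
    using y y_T by (simp add: l1norm_def split)
  moreover have "(\<Sum>i\<in>S. \<bar>y $ i\<bar> - \<bar>v $ i\<bar>) + (\<Sum>i\<in>T. \<bar>v $ i\<bar>) \<le> l1norm (y + v)"
  proof -
    have "(\<Sum>i\<in>S. \<bar>y $ i\<bar> - \<bar>v $ i\<bar>) \<le> (\<Sum>i\<in>S. \<bar>y $ i + v $ i\<bar>)"
      by (rule sum_mono) (metis abs_triangle_ineq4 add_diff_cancel_right' diff_le_eq)
    then show ?thesis
      using y v y_T by (simp add: l1norm_def split)
  qed
  ultimately have T_le_S: "(\<Sum>i\<in>T. \<bar>v $ i\<bar>) \<le> (\<Sum>i\<in>S. \<bar>v $ i\<bar>)"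
    using descent by (simp add: sum_subtractf)
  have "(\<Sum>i\<in>S. \<bar>v $ i\<bar>) \<le> sqrt (card S * (\<Sum>i\<in>S. (v $ i)\<^sup>2))"
    using sum_squared_le_card_mult_sum_squares[of "\<lambda>i. \<bar>v $ i\<bar>" S] by (simp add: real_le_rsqrt)
  also have "\<dots> \<le> sqrt (s * (\<Sum>i<n. (v $ i)\<^sup>2))"
  proof (intro real_sqrt_le_mono mult_mono)
    show "real (card S) \<le> real s" using sparse y by (simp add: l0norm_def S_def)
    show "(\<Sum>i\<in>S. (v $ i)\<^sup>2) \<le> (\<Sum>i<n. (v $ i)\<^sup>2)" by (simp add: split sum_nonneg)
  qed (auto intro: sum_nonneg)
  also have "\<dots> = sqrt s * l2norm v"
    using v by (simp add: l2norm_def real_sqrt_mult)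
  finally show ?thesis
    using v T_le_S by (simp add: l1norm_def split)
qed

lemma l2norm_square_le_l1norm_linfnorm:
  assumes B: "B \<in> carrier_mat n n" and g: "g \<in> carrier_vec n"
  shows "(l2norm (B *\<^sub>v g))\<^sup>2 \<le> l1norm (transpose_mat B *\<^sub>v (B *\<^sub>v g)) * linfnorm g"
proof -
  have Bg: "B *\<^sub>v g \<in> carrier_vec n" using B g by simp
  have "(l2norm (B *\<^sub>v g))\<^sup>2 = (transpose_mat B *\<^sub>v (B *\<^sub>v g)) \<bullet> g"
    unfolding l2norm_square transpose_vec_mult_scalar[OF B g Bg] ..
  also have "\<dots> \<le> l1norm (transpose_mat B *\<^sub>v (B *\<^sub>v g)) * linfnorm g"
    using B g by (intro scalar_prod_le_l1norm_linfnorm[of _ n]) auto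
  finally show ?thesis .
qed

lemma l2norm_recovery_error_le:
  assumes "\<beta> \<le> r" and x: "x \<in> carrier_vec N" and xhat: "xhat \<in> carrier_vec N"
    and sparse: "l0norm (transpose_mat (Dmat N ^\<^sub>m \<beta>) *\<^sub>v x) \<le> s"
    and descent: "l1norm (transpose_mat (Dmat N ^\<^sub>m \<beta>) *\<^sub>v xhat)
                    \<le> l1norm (transpose_mat (Dmat N ^\<^sub>m \<beta>) *\<^sub>v x)"
    and w: "w \<in> carrier_vec N" and error: "(Dmat N ^\<^sub>m r) *\<^sub>v w = xhat - x"
  shows "l2norm (xhat - x) \<le> 2 ^ (r + 1) * sqrt s * linfnorm w"
proof -
  define B where "B = Dmat N ^\<^sub>m \<beta>"
  define g where "g = (Dmat N ^\<^sub>m (r - \<beta>)) *\<^sub>v w"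
  define h where "h = xhat - x"
  have B: "B \<in> carrier_mat N N" and h: "h \<in> carrier_vec N"
    using x xhat by (simp_all add: B_def h_def)
  have g: "g \<in> carrier_vec N"
    unfolding g_def using pow_carrier_mat[OF Dmat_carrier] w by (rule mult_mat_vec_carrier)
  have "Dmat N ^\<^sub>m r = B * Dmat N ^\<^sub>m (r - \<beta>)"
    using pow_mat_add[OF Dmat_carrier, where k = \<beta> and l = "r - \<beta>"] \<open>\<beta> \<le> r\<close>
    by (simp add: B_def)
  then have h_eq: "h = B *\<^sub>v g"
    using error unfolding g_def h_def
    by (simp add: assoc_mult_mat_vec[OF B pow_carrier_mat[OF Dmat_carrier] w])
  have g_le: "linfnorm g \<le> 2 ^ (r - \<beta>) * linfnorm w"
    unfolding g_def
    by (rule pow_mat_mult_vec_norm_le[where nrm = linfnorm, OF Dmat_carrier _ linfnorm_Dmat_mult_vec_le w])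
      simp
  have Bh_le: "l2norm (transpose_mat B *\<^sub>v h) \<le> 2 ^ \<beta> * l2norm h"
    unfolding B_def transpose_pow_mat[OF Dmat_carrier]
    by (rule pow_mat_mult_vec_norm_le[where nrm = l2norm, OF _ _ l2norm_transpose_Dmat_mult_vec_le h]) simp_all
  have "xhat = x + h"
    using x xhat by (intro eq_vecI) (auto simp: h_def)
  then have "transpose_mat B *\<^sub>v xhat = transpose_mat B *\<^sub>v x + transpose_mat B *\<^sub>v h"
    using B x h by (simp add: mult_add_distrib_mat_vec[of _ N N])
  then have cone: "l1norm (transpose_mat B *\<^sub>v h) \<le> 2 * sqrt s * l2norm (transpose_mat B *\<^sub>v h)"
    using sparse descent unfolding B_def[symmetric]
    by (intro l1norm_le_in_sparse_descent_cone[of _ N]) (use B x h in auto)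
  have "(l2norm h)\<^sup>2 \<le> l1norm (transpose_mat B *\<^sub>v h) * linfnorm g"
    unfolding h_eq by (rule l2norm_square_le_l1norm_linfnorm[OF B g])
  also have "\<dots> \<le> (2 * sqrt s * (2 ^ \<beta> * l2norm h)) * (2 ^ (r - \<beta>) * linfnorm w)"
  proof (rule mult_mono[OF _ g_le])
    show "l1norm (transpose_mat B *\<^sub>v h) \<le> 2 * sqrt s * (2 ^ \<beta> * l2norm h)"
      using order_trans[OF cone mult_left_mono[OF Bh_le]] by simp
  qed (simp_all add: linfnorm_nonneg l2norm_nonneg)
  also have "\<dots> = (2 ^ (r + 1) * sqrt s * linfnorm w) * l2norm h"
    using \<open>\<beta> \<le> r\<close> by (simp add: power_add[symmetric])
  finally have "l2norm h * l2norm h \<le> (2 ^ (r + 1) * sqrt s * linfnorm w) * l2norm h"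
    by (simp add: power2_eq_square)
  then show ?thesis
    using l2norm_nonneg[of h] linfnorm_nonneg[of w] unfolding h_def[symmetric]
    by (cases "l2norm h = 0") (auto intro: mult_right_le_imp_le)
qed

theorem theorem1:
  fixes \<beta> r :: nat
  assumes "\<beta> \<in> {1, 2}" and "r \<ge> \<beta>"
  shows "\<exists>C::real. \<forall>(N::nat) (s::nat) (\<delta>::real) (c::real) (J1::int) (J2::int)
            (x::real vec) (q::real vec) (u::real vec) (xhat::real vec).
     \<delta> > 0 \<longrightarrow> J1 \<le> J2 \<longrightarrow>
     x \<in> carrier_vec N \<longrightarrow> (\<forall>i<N. 0 \<le> x $ i \<and> x $ i \<le> 1) \<longrightarrow>
     l0norm (transpose_mat (Dmat N ^\<^sub>m \<beta>) *\<^sub>v x) \<le> s \<longrightarrow>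
     sigma_delta (alphabet c \<delta> J1 J2) r x q u \<longrightarrow>
     linfnorm u \<le> \<delta> / 2 \<longrightarrow>
     xhat \<in> carrier_vec N \<longrightarrow>
     linfnorm (Dinv_pow N r (xhat - q)) \<le> \<delta> / 2 \<longrightarrow>
     (\<forall>z \<in> carrier_vec N. linfnorm (Dinv_pow N r (z - q)) \<le> \<delta> / 2 \<longrightarrow>
         l1norm (transpose_mat (Dmat N ^\<^sub>m \<beta>) *\<^sub>v xhat)
           \<le> l1norm (transpose_mat (Dmat N ^\<^sub>m \<beta>) *\<^sub>v z)) \<longrightarrow>
     l2norm (xhat - x) \<le> C * sqrt (real s) * \<delta>"
proof (intro exI[of _ "2 ^ (r + 1)"] allI impI)
  fix N s :: nat and \<delta> c :: real and J1 J2 :: int and x q u xhat :: "real vec"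
  assume x: "x \<in> carrier_vec N"
    and sparse: "l0norm (transpose_mat (Dmat N ^\<^sub>m \<beta>) *\<^sub>v x) \<le> s"
    and quantized: "sigma_delta (alphabet c \<delta> J1 J2) r x q u"
    and stable: "linfnorm u \<le> \<delta> / 2"
    and xhat: "xhat \<in> carrier_vec N"
    and xhat_feasible: "linfnorm (Dinv_pow N r (xhat - q)) \<le> \<delta> / 2"
    and xhat_minimal: "\<forall>z \<in> carrier_vec N. linfnorm (Dinv_pow N r (z - q)) \<le> \<delta> / 2 \<longrightarrow>
         l1norm (transpose_mat (Dmat N ^\<^sub>m \<beta>) *\<^sub>v xhat)
           \<le> l1norm (transpose_mat (Dmat N ^\<^sub>m \<beta>) *\<^sub>v z)"
  (* The quantization rule, the alphabet, delta > 0 and x in [0,1]^N only serve to make the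
     scheme stable; since stability |u|_inf <= delta/2 is assumed, all that is used of the
     quantizer is the state equation D^r u = x - q. *)
  have q: "q \<in> carrier_vec N" and u: "u \<in> carrier_vec N"
    and u_eq: "(Dmat N ^\<^sub>m r) *\<^sub>v u = x - q"
    using quantized x by (auto simp: sigma_delta_def Let_def)
  define a where "a = Dinv_pow N r (xhat - q)"
  have a: "a \<in> carrier_vec N" "(Dmat N ^\<^sub>m r) *\<^sub>v a = xhat - q"
    using Dinv_pow_carrier[of "xhat - q" N r] Dmat_pow_mult_vec_Dinv_pow[of "xhat - q" N r] xhat q
    by (simp_all add: a_def)
  have "Dinv_pow N r (x - q) = u"
    by (rule Dinv_pow_unique[OF u u_eq])
  then have descent: "l1norm (transpose_mat (Dmat N ^\<^sub>m \<beta>) *\<^sub>v xhat)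
      \<le> l1norm (transpose_mat (Dmat N ^\<^sub>m \<beta>) *\<^sub>v x)"
    using xhat_minimal x stable by auto
  have error: "(Dmat N ^\<^sub>m r) *\<^sub>v (a - u) = xhat - x"
    using a u u_eq q x xhat by (simp add: mult_minus_distrib_mat_vec[of _ N N]) auto
  have "linfnorm (a - u) \<le> \<delta>"
    using linfnorm_minus_le[OF a(1) u] xhat_feasible stable by (simp add: a_def)
  moreover have "l2norm (xhat - x) \<le> 2 ^ (r + 1) * sqrt s * linfnorm (a - u)"
    using assms(2) x xhat sparse descent a(1) u error by (intro l2norm_recovery_error_le) auto
  ultimately show "l2norm (xhat - x) \<le> 2 ^ (r + 1) * sqrt s * \<delta>"
    by (elim order_trans) (simp add: mult_left_mono)
qed

end
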